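(* Assume $a/b>\sqrt2$, $|u|<u_{\max}$ and $a^2+(u^2-2)c^2\ne0$. With $R$ and $R'$ as below, $$\frac1{R^2}+\frac1{R'^2}=\frac1{c^2},$$ i.e. half the harmonic mean of $R^2$ and $R'^2$ equals $c^2=a^2-b^2$, independently of $u$.
   Context: The elliptic billiard is $\mathcal{E}: x^2/a^2+y^2/b^2=1$, $a>b>0$, $c=\sqrt{a^2-b^2}$. For $a/b>\sqrt2$ the self-intersected 4-periodics are parametrized by $u$ with $|u|\le u_{\max}:=\frac{a}{c^2}\sqrt{a^2-2b^2}$. For parameter $u$, the vertices of the self-intersected 4-periodic and the foci lie on a circle of radius $R=\frac{a^2-c^2u^2}{2b\sqrt{1-u^2}}$, and the vertices of its outer polygon (the polygon whose vertices are intersections of tangent lines to $\mathcal{E}$ at consecutive vertices) and the foci lie on a circle of radius $|R'|$, where $R'=\frac{c(c^2u^2-a^2)}{a^2+(u^2-2)c^2}$. *)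

theory Defs
  imports Complex_Main
begin

definition foc :: "real \<Rightarrow> real \<Rightarrow> real" where
  "foc a b = sqrt (a^2 - b^2)"

definition umax :: "real \<Rightarrow> real \<Rightarrow> real" where
  "umax a b = a / (foc a b)^2 * sqrt (a^2 - 2*b^2)"

definition radR :: "real \<Rightarrow> real \<Rightarrow> real \<Rightarrow> real" where
  "radR a b u = (a^2 - (foc a b)^2 * u^2) / (2 * b * sqrt (1 - u^2))"

definition radR' :: "real \<Rightarrow> real \<Rightarrow> real \<Rightarrow> real" where
  "radR' a b u = foc a b * ((foc a b)^2 * u^2 - a^2) / (a^2 + (u^2 - 2) * (foc a b)^2)"

end

theory Submission
  imports Defs
begin

text \<open>With \<open>c\<^sup>2 = a\<^sup>2 - b\<^sup>2\<close>, the numerators of \<open>R\<close> and \<open>R'\<close> differ by \<open>2c\<^sup>2(1 - u\<^sup>2)\<close> and sum to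
  \<open>2b\<^sup>2\<close>, so the difference of their squares is \<open>4b\<^sup>2c\<^sup>2(1 - u\<^sup>2)\<close>. Dividing this Pythagorean
  relation by \<open>c\<^sup>2(a\<^sup>2 - c\<^sup>2u\<^sup>2)\<^sup>2\<close> gives the claim; the only analytic input is \<open>\<bar>u\<bar> < 1\<close>,
  which follows from \<open>u\<^sub>m\<^sub>a\<^sub>x < 1\<close>.\<close>

lemma foc_squared:
  assumes "\<bar>b\<bar> \<le> \<bar>a\<bar>"
  shows "(foc a b)^2 = a^2 - b^2"
  using assms by (simp add: foc_def abs_le_square_iff)

lemma radii_numerators_pythagorean:
  fixes a b c u :: real
  assumes "c^2 = a^2 - b^2"
  shows "(a^2 - c^2 * u^2)^2 = 4 * b^2 * c^2 * (1 - u^2) + (a^2 + (u^2 - 2) * c^2)^2"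
proof -
  have b2: "b^2 = a^2 - c^2" using assms by simp
  show ?thesis unfolding b2 by (simp add: algebra_simps power2_eq_square)
qed

lemma umax_less_one:
  assumes "0 < b" and "b < a"
  shows "umax a b < 1"
proof -
  have C: "(foc a b)^2 = a^2 - b^2" using assms by (simp add: foc_squared)
  have Cpos: "a^2 - b^2 > 0" using assms by (simp add: power_strict_mono)
  have "a * sqrt (a^2 - 2*b^2) < a^2 - b^2"
  proof (cases "a^2 - 2*b^2 \<ge> 0")
    case True
    have "(a * sqrt (a^2 - 2*b^2))^2 = (a^2 - b^2)^2 - b^4"
      using True by (simp add: power_mult_distrib algebra_simps power2_eq_square power4_eq_xxxx)
    also have "\<dots> < (a^2 - b^2)^2" using assms by simp
    finally show ?thesis using Cpos by (simp add: power2_less_imp_less)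
  next
    case False
    then have "a * sqrt (a^2 - 2*b^2) < 0" using assms by (simp add: mult_pos_neg)
    then show ?thesis using Cpos by linarith
  qed
  then show ?thesis unfolding umax_def C using Cpos by (simp add: divide_less_eq)
qed

theorem mainTheorem4:
  fixes a b u :: real
  assumes "a > b" and "b > 0" and "a / b > sqrt 2"
    and "\<bar>u\<bar> < umax a b"
    and "a^2 + (u^2 - 2) * (foc a b)^2 \<noteq> 0"
  shows "1 / (radR a b u)^2 + 1 / (radR' a b u)^2 = 1 / (foc a b)^2"
proof -
  define c where "c = foc a b"
  have c2: "c^2 = a^2 - b^2" unfolding c_def using assms by (simp add: foc_squared)
  have b2_pos: "b^2 > 0" and c2_pos: "c^2 > 0" using assms c2 by (simp_all add: power_strict_mono)
  have u2: "u^2 < 1"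
    using assms umax_less_one[of b a] by (simp add: abs_square_less_1)
  have "c^2 * u^2 < c^2" using c2_pos u2 by simp
  then have X: "a^2 - c^2 * u^2 > 0" using c2 b2_pos by linarith
  have s: "(sqrt (1 - u^2))^2 = 1 - u^2" using u2 by simp
  have R: "1 / (radR a b u)^2 = 4 * b^2 * c^2 * (1 - u^2) / (c^2 * (a^2 - c^2 * u^2)^2)"
    using c2_pos unfolding radR_def c_def[symmetric] by (simp add: power_divide power_mult_distrib s)
  have R': "1 / (radR' a b u)^2 = (a^2 + (u^2 - 2) * c^2)^2 / (c^2 * (a^2 - c^2 * u^2)^2)"
    unfolding radR'_def c_def[symmetric] by (simp add: power_divide power_mult_distrib power2_commute)
  have "1 / (radR a b u)^2 + 1 / (radR' a b u)^2
      = (4 * b^2 * c^2 * (1 - u^2) + (a^2 + (u^2 - 2) * c^2)^2) / (c^2 * (a^2 - c^2 * u^2)^2)"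
    unfolding R R' by (simp add: add_divide_distrib)
  also have "\<dots> = 1 / c^2"
    unfolding radii_numerators_pythagorean[OF c2, symmetric] using X by simp
  finally show ?thesis unfolding c_def .
qed

end
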